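(* Let $k\ge2$ and let $B=M\cup\{\omega\}$ where $\omega\in P_k\setminus M$ has $q\ge 1$ arguments. Let $s,m,n\ge 1$, and for each $i=1,\ldots,s$ let $F_i=\{f_{i1},\ldots,f_{im}\}$ be a system of $m$ functions from $P_k(n)$. Then there exist functions $g_1,\ldots,g_m\in P_k(s+n)$ such that for every $j=1,\ldots,m$ the function $g_j$ is an $s$-connector for the tuple $(f_{1j},\ldots,f_{sj})$, and $$I_B(\{g_1,\ldots,g_m\})\le\max\{I_B(F_1),\ldots,I_B(F_s)\}.$$
   Context: Let $k\ge 2$ be an integer and $E_k=\{0,1,\ldots,k-1\}$. $P_k(n)$ denotes the set of all functions $E_k^n\to E_k$, and $P_k=\bigcup_n P_k(n)$. Tuples are ordered componentwise. A function $f$ is monotone if $\tilde\alpha\le\tilde\beta$ implies $f(\tilde\alpha)\le f(\tilde\beta)$; $M$ is the set of all monotone functions in $P_k$ (of all arities, including constants). A basis is a set $B=M\cup\{\omega_1,\ldots,\omega_p\}$ with $p\ge1$ and $\omega_i\in P_k\setminus M$. A circuit over $B$ with inputs $x_1,\ldots,x_n$ is a finite directed acyclic graph whose source nodes are labelled by the variables $x_1,\ldots,x_n$ and each of whose other nodes (gates) is labelled by a $q$-ary function from $B$ and has $q$ ordered incoming edges; each node computes a function of $P_k(n)$ in the obvious way. A circuit realizes a system $F$ of functions of $x_1,\ldots,x_n$ if every function of $F$ is computed at some node. Gates labelled by functions of $M$ have weight $0$, gates labelled by some $\omega_i$ have weight $1$. The non-monotone complexity $I_B(S)$ of a circuit $S$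 is the sum of the weights of its gates; $I_B(F)$ is the minimum of $I_B(S)$ over all circuits $S$ over $B$ realizing $F$. For functions $f_1,\ldots,f_s\in P_k(n)$, an $s$-connector for the tuple $(f_1,\ldots,f_s)$ is a function $g(z_1,\ldots,z_s,x_1,\ldots,x_n)\in P_k(s+n)$ such that for each $i=1,\ldots,s$ and all $(x_1,\ldots,x_n)\in E_k^n$, $g(\tilde e_i,x_1,\ldots,x_n)=f_i(x_1,\ldots,x_n)$, where $\tilde e_i\in E_k^s$ is the tuple with $1$ in position $i$ and $0$ elsewhere. *)

theory Defs
  imports Main
begin

text \<open>A function of P_k(n) is represented as a HOL function on lists of naturals;
only its values on E_k^n (lists of length n with entries < k) matter.\<close>

definition tuples :: "nat \<Rightarrow> nat \<Rightarrow> nat list set" where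
  "tuples k n = {xs. length xs = n \<and> set xs \<subseteq> {..<k}}"

definition in_Pk :: "nat \<Rightarrow> nat \<Rightarrow> (nat list \<Rightarrow> nat) \<Rightarrow> bool" where
  "in_Pk k n f \<longleftrightarrow> (\<forall>xs\<in>tuples k n. f xs < k)"

definition monotone_fn :: "nat \<Rightarrow> nat \<Rightarrow> (nat list \<Rightarrow> nat) \<Rightarrow> bool" where
  "monotone_fn k n f \<longleftrightarrow> in_Pk k n f \<and>
     (\<forall>xs\<in>tuples k n. \<forall>ys\<in>tuples k n. list_all2 (\<le>) xs ys \<longrightarrow> f xs \<le> f ys)"

datatype gate_lab = Mono "nat list \<Rightarrow> nat" | Omega

type_synonym circuit = "(gate_lab \<times> nat list) list"

fun lab_apply :: "(nat list \<Rightarrow> nat) \<Rightarrow> gate_lab \<Rightarrow> nat list \<Rightarrow> nat" where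
  "lab_apply \<omega> (Mono h) ys = h ys"
| "lab_apply \<omega> Omega ys = \<omega> ys"

text \<open>Nodes 0..n-1 are the inputs x_1..x_n; node n+j is gate j. Each gate only reads earlier nodes.\<close>
definition eval_circ :: "(nat list \<Rightarrow> nat) \<Rightarrow> circuit \<Rightarrow> nat list \<Rightarrow> nat list" where
  "eval_circ \<omega> C xs =
     foldl (\<lambda>vals (l, args). vals @ [lab_apply \<omega> l (map ((!) vals) args)]) xs C"

definition wf_circ :: "nat \<Rightarrow> nat \<Rightarrow> nat \<Rightarrow> circuit \<Rightarrow> bool" where
  "wf_circ k q n C \<longleftrightarrow> (\<forall>j<length C.
     (\<forall>i\<in>set (snd (C ! j)). i < n + j) \<and>
     (case fst (C ! j) of Mono h \<Rightarrow> monotone_fn k (length (snd (C ! j))) h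
                        | Omega \<Rightarrow> length (snd (C ! j)) = q))"

definition realizes :: "nat \<Rightarrow> nat \<Rightarrow> (nat list \<Rightarrow> nat) \<Rightarrow> circuit \<Rightarrow> (nat list \<Rightarrow> nat) set \<Rightarrow> bool" where
  "realizes k n \<omega> C F \<longleftrightarrow>
     (\<forall>f\<in>F. \<exists>i<n + length C. \<forall>xs\<in>tuples k n. eval_circ \<omega> C xs ! i = f xs)"

fun is_omega :: "gate_lab \<Rightarrow> bool" where
  "is_omega Omega = True"
| "is_omega (Mono _) = False"

definition omega_count :: "circuit \<Rightarrow> nat" where
  "omega_count C = length (filter (\<lambda>g. is_omega (fst g)) C)"

definition I_B :: "nat \<Rightarrow> nat \<Rightarrow> (nat list \<Rightarrow> nat) \<Rightarrow> nat \<Rightarrow> (nat list \<Rightarrow> nat) set \<Rightarrow> nat" where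
  "I_B k q \<omega> n F = (LEAST c. \<exists>C. wf_circ k q n C \<and> realizes k n \<omega> C F \<and> omega_count C = c)"

definition unit_tuple :: "nat \<Rightarrow> nat \<Rightarrow> nat list" where
  "unit_tuple s i = map (\<lambda>l. if l = i then 1 else 0) [1..<s+1]"

definition connector :: "nat \<Rightarrow> nat \<Rightarrow> nat \<Rightarrow> (nat list \<Rightarrow> nat) \<Rightarrow> (nat \<Rightarrow> nat list \<Rightarrow> nat) \<Rightarrow> bool" where
  "connector k s n g f \<longleftrightarrow>
     (\<forall>i\<in>{1..s}. \<forall>xs\<in>tuples k n. g (unit_tuple s i @ xs) = f i xs)"

end

theory Submission
  imports Defs
begin

text \<open>Let \<open>C\<^sub>i\<close> be an optimal circuit for \<open>F\<^sub>i\<close> and \<open>c = max I\<^sub>B(F\<^sub>i)\<close>.  With its omega gates cut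
  open, \<open>C\<^sub>i\<close> computes monotone functions of \<open>x\<close> and of the outputs of its omega gates; in
  particular the arguments of its \<open>t\<close>-th omega gate are monotone functions of \<open>x\<close> and the first
  \<open>t\<close> omega outputs.  The connector circuit has \<open>c\<close> omega gates; the arguments of the \<open>t\<close>-th one
  are computed by monotone gates as \<open>max {a\<^sub>i : z\<^sub>i \<ge> 1}\<close>, where \<open>a\<^sub>i\<close> is the corresponding argument
  in \<open>C\<^sub>i\<close>.  On \<open>z = e\<^sub>i\<close> this picks \<open>a\<^sub>i\<close>, so by induction on \<open>t\<close> the omega gates reproduce those
  of \<open>C\<^sub>i\<close>, and outputs selected in the same way compute \<open>f\<^sub>i\<^sub>j\<close>.

  If some \<open>F\<^sub>i\<close> has no circuit at all, then neither has any system of connectors, since fixing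
  \<open>z = e\<^sub>i\<close> would turn a circuit for the connectors into one for \<open>F\<^sub>i\<close>; both complexities are
  then the same junk value.\<close>

lemma eval_circ_Nil [simp]: "eval_circ \<omega> [] vals = vals"
  by (simp add: eval_circ_def)

lemma eval_circ_Cons [simp]:
  "eval_circ \<omega> ((l, a) # C) vals = eval_circ \<omega> C (vals @ [lab_apply \<omega> l (map ((!) vals) a)])"
  by (simp add: eval_circ_def)

lemma eval_circ_append: "eval_circ \<omega> (C1 @ C2) vals = eval_circ \<omega> C2 (eval_circ \<omega> C1 vals)"
  by (simp add: eval_circ_def)

lemma length_eval_circ [simp]: "length (eval_circ \<omega> C vals) = length vals + length C"
  by (induction C arbitrary: vals) auto

lemma omega_count_Nil [simp]: "omega_count [] = 0"
  and omega_count_Cons_Mono [simp]: "omega_count ((Mono h, a) # C) = omega_count C"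
  and omega_count_Cons_Omega [simp]: "omega_count ((Omega, a) # C) = Suc (omega_count C)"
  and omega_count_append: "omega_count (C1 @ C2) = omega_count C1 + omega_count C2"
  by (auto simp: omega_count_def)

lemma wf_circ_Nil [simp]: "wf_circ k q b []"
  by (simp add: wf_circ_def)

lemma wf_circ_Cons:
  "wf_circ k q b ((l, a) # C) \<longleftrightarrow> (\<forall>i\<in>set a. i < b) \<and>
     (case l of Mono h \<Rightarrow> monotone_fn k (length a) h | Omega \<Rightarrow> length a = q) \<and>
     wf_circ k q (Suc b) C"
  unfolding wf_circ_def
  by (simp only: length_Cons All_less_Suc2 nth_Cons_0 nth_Cons_Suc fst_conv snd_conv) auto

lemma wf_circ_append: "wf_circ k q b (C1 @ C2) \<longleftrightarrow> wf_circ k q b C1 \<and> wf_circ k q (b + length C1) C2"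
proof (induction C1 arbitrary: b)
  case (Cons g C1)
  then show ?case by (cases g) (simp add: wf_circ_Cons)
qed simp

lemma take_drop_tuples:
  "w \<in> tuples k (n + t) \<Longrightarrow> take n w \<in> tuples k n \<and> drop n w \<in> tuples k t"
  unfolding tuples_def using set_take_subset[of n w] set_drop_subset[of n w] by auto

lemma nth_lessThan: "set vals \<subseteq> {..<k} \<Longrightarrow> p < length vals \<Longrightarrow> vals ! p < k"
  using nth_mem by blast

lemma map_nth_tuples:
  "set vals \<subseteq> {..<k} \<Longrightarrow> \<forall>p\<in>set a. p < length vals \<Longrightarrow> map ((!) vals) a \<in> tuples k (length a)"
  by (auto simp: tuples_def intro: nth_lessThan)

lemma monotone_gate_less:
  assumes "monotone_fn k (length a) h" "\<forall>p\<in>set a. p < length vals" "set vals \<subseteq> {..<k}"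
  shows "h (map ((!) vals) a) < k"
  using assms map_nth_tuples[OF assms(3,2)] by (auto simp: monotone_fn_def in_Pk_def)

lemma monotone_gate_mono:
  assumes "monotone_fn k (length a) h" "\<forall>p\<in>set a. p < length vals"
    "set vals \<subseteq> {..<k}" "set vals' \<subseteq> {..<k}" "list_all2 (\<le>) vals vals'"
  shows "h (map ((!) vals) a) \<le> h (map ((!) vals') a)"
proof -
  have "length vals' = length vals"
    using assms(5) by (simp add: list_all2_lengthD)
  then have "map ((!) vals') a \<in> tuples k (length a)"
    using assms(2,4) by (simp add: map_nth_tuples)
  moreover have "list_all2 (\<le>) (map ((!) vals) a) (map ((!) vals') a)"
    using assms(2,5) by (auto simp: list_all2_conv_all_nth)
  ultimately show ?thesis
    using assms(1) map_nth_tuples[OF assms(3,2)] by (auto simp: monotone_fn_def)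
qed

lemma eval_circ_lessThan:
  "wf_circ k q (length vals) C \<Longrightarrow> in_Pk k q \<omega> \<Longrightarrow> set vals \<subseteq> {..<k}
   \<Longrightarrow> set (eval_circ \<omega> C vals) \<subseteq> {..<k}"
proof (induction C arbitrary: vals)
  case (Cons g C)
  obtain l a where g: "g = (l, a)" by fastforce
  have "lab_apply \<omega> l (map ((!) vals) a) < k"
    using Cons.prems g monotone_gate_less map_nth_tuples[of vals k a]
    by (cases l) (auto simp: wf_circ_Cons in_Pk_def)
  then show ?case using Cons g by (auto simp: wf_circ_Cons)
qed simp

section \<open>Cutting the omega gates open\<close>

definition hd_or_0 :: "nat list \<Rightarrow> nat" where
  "hd_or_0 ys = (case ys of [] \<Rightarrow> 0 | y # _ \<Rightarrow> y)"

fun eval_open :: "circuit \<Rightarrow> nat list \<Rightarrow> nat list \<Rightarrow> nat list" where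
  "eval_open [] ys vals = vals"
| "eval_open ((Mono h, a) # C) ys vals = eval_open C ys (vals @ [h (map ((!) vals) a)])"
| "eval_open ((Omega, a) # C) ys vals = eval_open C (tl ys) (vals @ [hd_or_0 ys])"

fun omega_args :: "circuit \<Rightarrow> nat list \<Rightarrow> nat list \<Rightarrow> nat list list" where
  "omega_args [] ys vals = []"
| "omega_args ((Mono h, a) # C) ys vals = omega_args C ys (vals @ [h (map ((!) vals) a)])"
| "omega_args ((Omega, a) # C) ys vals =
     map ((!) vals) a # omega_args C (tl ys) (vals @ [hd_or_0 ys])"

fun omega_vals :: "(nat list \<Rightarrow> nat) \<Rightarrow> circuit \<Rightarrow> nat list \<Rightarrow> nat list" where
  "omega_vals \<omega> [] vals = []"
| "omega_vals \<omega> ((Mono h, a) # C) vals = omega_vals \<omega> C (vals @ [h (map ((!) vals) a)])"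
| "omega_vals \<omega> ((Omega, a) # C) vals =
     \<omega> (map ((!) vals) a) # omega_vals \<omega> C (vals @ [\<omega> (map ((!) vals) a)])"

lemma eval_open_omega_vals: "eval_open C (omega_vals \<omega> C vals) vals = eval_circ \<omega> C vals"
  by (induction \<omega> C vals rule: omega_vals.induct) (auto simp: hd_or_0_def)

lemma map_omega_omega_args: "map \<omega> (omega_args C (omega_vals \<omega> C vals) vals) = omega_vals \<omega> C vals"
  by (induction \<omega> C vals rule: omega_vals.induct) (auto simp: hd_or_0_def)

lemma length_omega_args [simp]: "length (omega_args C ys vals) = omega_count C"
  by (induction C ys vals rule: omega_args.induct) auto

lemma length_omega_vals [simp]: "length (omega_vals \<omega> C vals) = omega_count C"
  by (induction \<omega> C vals rule: omega_vals.induct) auto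

lemma length_eval_open [simp]: "length (eval_open C ys vals) = length vals + length C"
  by (induction C ys vals rule: eval_open.induct) auto

lemma take_Suc_eq_hd_tl:
  "take (Suc t) ys = take (Suc t) ys' \<Longrightarrow> hd_or_0 ys = hd_or_0 ys' \<and> take t (tl ys) = take t (tl ys')"
  by (cases ys; cases ys') (auto simp: hd_or_0_def)

lemma eval_open_take_eq:
  "take (omega_count C) ys = take (omega_count C) ys' \<Longrightarrow> eval_open C ys vals = eval_open C ys' vals"
proof (induction C ys vals arbitrary: ys' rule: eval_open.induct)
  case (3 a C ys vals)
  then show ?case using take_Suc_eq_hd_tl[of "omega_count C" ys ys'] by simp
qed simp_all

lemma omega_args_take_eq:
  "take t ys = take t ys' \<Longrightarrow> take (Suc t) (omega_args C ys vals) = take (Suc t) (omega_args C ys' vals)"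
proof (induction C ys vals arbitrary: ys' t rule: omega_args.induct)
  case (3 a C ys vals)
  then show ?case using take_Suc_eq_hd_tl[of _ ys ys'] by (cases t) simp_all
qed simp_all

lemma hd_or_0_less: "0 < k \<Longrightarrow> set ys \<subseteq> {..<k} \<Longrightarrow> hd_or_0 ys < k"
  by (cases ys) (auto simp: hd_or_0_def)

lemma hd_or_0_mono: "list_all2 (\<le>) ys ys' \<Longrightarrow> hd_or_0 ys \<le> hd_or_0 ys'"
  by (cases ys; cases ys') (auto simp: hd_or_0_def)

lemma set_tl_subset: "set ys \<subseteq> A \<Longrightarrow> set (tl ys) \<subseteq> A"
  by (cases ys) auto

lemma list_all2_tl: "list_all2 P ys ys' \<Longrightarrow> list_all2 P (tl ys) (tl ys')"
  by (cases ys; cases ys') auto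

lemma length_omega_args_nth:
  "wf_circ k q (length vals) C \<Longrightarrow> t < omega_count C \<Longrightarrow> length (omega_args C ys vals ! t) = q"
proof (induction C ys vals arbitrary: t rule: omega_args.induct)
  case (2 h a C ys vals)
  then show ?case by (simp add: wf_circ_Cons)
next
  case (3 a C ys vals)
  then show ?case by (cases t) (simp_all add: wf_circ_Cons)
qed simp

lemma eval_open_lessThan:
  assumes "wf_circ k q (length vals) C" "0 < k" "set vals \<subseteq> {..<k}" "set ys \<subseteq> {..<k}"
  shows "set (eval_open C ys vals) \<subseteq> {..<k} \<and> (\<forall>as\<in>set (omega_args C ys vals). set as \<subseteq> {..<k})"
  using assms
proof (induction C ys vals rule: eval_open.induct)
  case (2 h a C ys vals)
  then have "h (map ((!) vals) a) < k"
    by (intro monotone_gate_less) (simp_all add: wf_circ_Cons)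
  then show ?case using 2 by (simp only: eval_open.simps omega_args.simps)
    (intro 2(1), simp_all add: wf_circ_Cons)
next
  case (3 a C ys vals)
  then have "map ((!) vals) a \<in> tuples k q"
    using map_nth_tuples[of vals k a] by (simp add: wf_circ_Cons)
  moreover have "set (eval_open C (tl ys) (vals @ [hd_or_0 ys])) \<subseteq> {..<k} \<and>
    (\<forall>as\<in>set (omega_args C (tl ys) (vals @ [hd_or_0 ys])). set as \<subseteq> {..<k})"
    using 3 hd_or_0_less[of k ys] set_tl_subset[of ys] by (intro 3(1)) (simp_all add: wf_circ_Cons)
  ultimately show ?case by (simp add: tuples_def)
qed simp

lemma eval_open_mono:
  assumes "wf_circ k q (length vals) C" "0 < k"
    "set vals \<subseteq> {..<k}" "set ys \<subseteq> {..<k}" "set vals' \<subseteq> {..<k}" "set ys' \<subseteq> {..<k}"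
    "list_all2 (\<le>) vals vals'" "list_all2 (\<le>) ys ys'"
  shows "list_all2 (\<le>) (eval_open C ys vals) (eval_open C ys' vals') \<and>
    list_all2 (list_all2 (\<le>)) (omega_args C ys vals) (omega_args C ys' vals')"
  using assms
proof (induction C ys vals arbitrary: ys' vals' rule: eval_open.induct)
  case (2 h a C ys vals)
  have len: "length vals' = length vals" using 2(8) by (simp add: list_all2_lengthD)
  have gate: "\<forall>p\<in>set a. p < length vals" "monotone_fn k (length a) h"
    using 2(2) by (simp_all add: wf_circ_Cons)
  have "h (map ((!) vals) a) < k" "h (map ((!) vals') a) < k"
    using gate 2(4,6) len by (simp_all add: monotone_gate_less)
  moreover have "h (map ((!) vals) a) \<le> h (map ((!) vals') a)"
    using gate 2(4,6,8) by (intro monotone_gate_mono)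
  ultimately show ?case using 2 len
    by (simp only: eval_open.simps omega_args.simps)
      (intro 2(1), simp_all add: wf_circ_Cons list_all2_appendI)
next
  case (3 a C ys vals)
  have len: "length vals' = length vals" using 3(8) by (simp add: list_all2_lengthD)
  have "list_all2 (\<le>) (map ((!) vals) a) (map ((!) vals') a)"
    using 3(2,8) by (auto simp: wf_circ_Cons list_all2_conv_all_nth)
  moreover have "list_all2 (\<le>) (eval_open C (tl ys) (vals @ [hd_or_0 ys]))
      (eval_open C (tl ys') (vals' @ [hd_or_0 ys'])) \<and>
    list_all2 (list_all2 (\<le>)) (omega_args C (tl ys) (vals @ [hd_or_0 ys]))
      (omega_args C (tl ys') (vals' @ [hd_or_0 ys']))"
    using 3 len hd_or_0_less[of k ys] hd_or_0_less[of k ys'] set_tl_subset[of ys]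
      set_tl_subset[of ys'] hd_or_0_mono[OF 3(9)] list_all2_tl[OF 3(9)]
    by (intro 3(1)) (simp_all add: wf_circ_Cons list_all2_appendI)
  ultimately show ?case by simp
qed simp

lemma monotone_fn_eval_open:
  assumes "wf_circ k q n C" "0 < k" "p < n + length C"
  shows "monotone_fn k (n + c) (\<lambda>w. eval_open C (drop n w) (take n w) ! p)"
  unfolding monotone_fn_def in_Pk_def
proof (intro conjI ballI impI)
  fix w assume "w \<in> tuples k (n + c)"
  then have w: "length (take n w) = n" "set (take n w) \<subseteq> {..<k}" "set (drop n w) \<subseteq> {..<k}"
    using take_drop_tuples[of w k n c] by (simp_all add: tuples_def)
  have wf: "wf_circ k q (length (take n w)) C" using assms(1) w(1) by (simp only:)
  have "set (eval_open C (drop n w) (take n w)) \<subseteq> {..<k}"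
    using eval_open_lessThan[OF wf assms(2) w(2,3)] by blast
  then show "eval_open C (drop n w) (take n w) ! p < k"
    by (rule nth_lessThan) (use assms(3) w(1) in simp)
  fix w' assume "w' \<in> tuples k (n + c)" and le: "list_all2 (\<le>) w w'"
  then have w': "set (take n w') \<subseteq> {..<k}" "set (drop n w') \<subseteq> {..<k}"
    using take_drop_tuples[of w' k n c] by (simp_all add: tuples_def)
  have "list_all2 (\<le>) (eval_open C (drop n w) (take n w)) (eval_open C (drop n w') (take n w'))"
    using eval_open_mono[OF wf assms(2) w(2,3) w' list_all2_takeI[OF le] list_all2_dropI[OF le]] by blast
  then show "eval_open C (drop n w) (take n w) ! p \<le> eval_open C (drop n w') (take n w') ! p"
    using assms(3) w(1) by (simp add: list_all2_nthD)
qed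

definition omega_arg :: "circuit \<Rightarrow> nat \<Rightarrow> nat \<Rightarrow> nat \<Rightarrow> nat list \<Rightarrow> nat" where
  "omega_arg C n t r w =
     (if t < omega_count C then omega_args C (drop n w) (take n w) ! t ! r else 0)"

lemma monotone_fn_omega_arg:
  assumes "wf_circ k q n C" "0 < k" "r < q"
  shows "monotone_fn k (n + t) (omega_arg C n t r)"
  unfolding monotone_fn_def in_Pk_def
proof (intro conjI ballI impI)
  fix w assume "w \<in> tuples k (n + t)"
  then have w: "length (take n w) = n" "set (take n w) \<subseteq> {..<k}" "set (drop n w) \<subseteq> {..<k}"
    using take_drop_tuples[of w k n t] by (simp_all add: tuples_def)
  have wf: "wf_circ k q (length (take n w)) C" using assms(1) w(1) by (simp only:)
  let ?L = "omega_args C (drop n w) (take n w)"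
  have L: "set (?L ! t) \<subseteq> {..<k} \<and> length (?L ! t) = q" if "t < omega_count C"
  proof
    have "?L ! t \<in> set ?L" using that by (simp only: nth_mem length_omega_args)
    then show "set (?L ! t) \<subseteq> {..<k}" using eval_open_lessThan[OF wf assms(2) w(2,3)] by blast
    show "length (?L ! t) = q" using length_omega_args_nth[OF wf that] .
  qed
  show "omega_arg C n t r w < k"
    using L assms(2,3) nth_lessThan[of "?L ! t" k r] by (simp add: omega_arg_def)
  fix w' assume "w' \<in> tuples k (n + t)" and le: "list_all2 (\<le>) w w'"
  then have w': "set (take n w') \<subseteq> {..<k}" "set (drop n w') \<subseteq> {..<k}"
    using take_drop_tuples[of w' k n t] by (simp_all add: tuples_def)
  have "list_all2 (list_all2 (\<le>)) ?L (omega_args C (drop n w') (take n w'))"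
    using eval_open_mono[OF wf assms(2) w(2,3) w' list_all2_takeI[OF le] list_all2_dropI[OF le]] by blast
  then have "list_all2 (\<le>) (?L ! t) (omega_args C (drop n w') (take n w') ! t)"
    if "t < omega_count C" using that by (simp add: list_all2_nthD)
  then show "omega_arg C n t r w \<le> omega_arg C n t r w'"
    using L assms(3) by (simp add: omega_arg_def list_all2_nthD)
qed

definition selector :: "nat \<Rightarrow> nat list \<Rightarrow> (nat \<Rightarrow> nat) \<Rightarrow> nat" where
  "selector s zs a = Max (insert 0 ((\<lambda>i. if 1 \<le> zs ! (i - 1) then a i else 0) ` {1..s}))"

lemma length_unit_tuple [simp]: "length (unit_tuple s i) = s"
  by (simp add: unit_tuple_def)

lemma nth_unit_tuple:
  assumes "i' \<in> {1..s}"
  shows "unit_tuple s i ! (i' - 1) = (if i' = i then 1 else 0)"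
proof -
  have "[1..<s+1] ! (i' - 1) = i'" using assms by (subst nth_upt) auto
  then show ?thesis using assms unfolding unit_tuple_def by (subst nth_map) auto
qed

lemma unit_tuple_tuples: "2 \<le> k \<Longrightarrow> unit_tuple s i \<in> tuples k s"
  by (auto simp: tuples_def unit_tuple_def)

lemma unit_tuple_inj:
  assumes "i \<in> {1..s}" "unit_tuple s i = unit_tuple s i'"
  shows "i = i'"
proof (rule ccontr)
  assume "i \<noteq> i'"
  then have "unit_tuple s i' ! (i - 1) = 0" using nth_unit_tuple[OF assms(1), of i'] by simp
  moreover have "unit_tuple s i ! (i - 1) = 1" using nth_unit_tuple[OF assms(1), of i] by simp
  ultimately show False using assms(2) by simp
qed

lemma selector_unit_tuple:
  assumes "i \<in> {1..s}"
  shows "selector s (unit_tuple s i) a = a i"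
proof -
  let ?c = "\<lambda>i'. if 1 \<le> unit_tuple s i ! (i' - 1) then a i' else 0"
  have c: "?c i' = (if i' = i then a i else 0)" if "i' \<in> {1..s}" for i'
    using nth_unit_tuple[OF that, of i] by simp
  have "a i \<in> insert 0 (?c ` {1..s})"
    by (rule insertI2, rule image_eqI[where x = i]) (use c[OF assms] assms in simp_all)
  moreover have "\<forall>x\<in>insert 0 (?c ` {1..s}). x \<le> a i" using c by auto
  ultimately show ?thesis unfolding selector_def by (intro antisym) simp_all
qed

lemma selector_less: "0 < k \<Longrightarrow> \<forall>i\<in>{1..s}. a i < k \<Longrightarrow> selector s zs a < k"
  unfolding selector_def by (auto simp: Max_less_iff)

lemma selector_mono:
  assumes "\<forall>i\<in>{1..s}. zs ! (i - 1) \<le> zs' ! (i - 1)" "\<forall>i\<in>{1..s}. a i \<le> a' i"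
  shows "selector s zs a \<le> selector s zs' a'"
  unfolding selector_def
proof (subst Max_le_iff, simp, simp, intro ballI)
  fix y assume y: "y \<in> insert 0 ((\<lambda>i. if 1 \<le> zs ! (i - 1) then a i else 0) ` {1..s})"
  let ?S = "insert 0 ((\<lambda>i. if 1 \<le> zs' ! (i - 1) then a' i else 0) ` {1..s})"
  show "y \<le> Max ?S"
  proof (cases "y = 0")
    case False
    then obtain i where i: "i \<in> {1..s}" "1 \<le> zs ! (i - 1)" "y = a i"
      using y by (auto split: if_splits)
    then have "a' i \<in> ?S" using assms(1) by (force intro!: image_eqI[where x = i])
    then have "a' i \<le> Max ?S" by simp
    then show ?thesis using i assms(2) by force
  qed simp
qed

lemma monotone_fn_selector:
  assumes "0 < k" "\<forall>i\<in>{1..s}. monotone_fn k N (F i)"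
  shows "monotone_fn k (s + N) (\<lambda>vs. selector s (take s vs) (\<lambda>i. F i (drop s vs)))"
  unfolding monotone_fn_def in_Pk_def
proof (intro conjI ballI impI)
  fix xs assume "xs \<in> tuples k (s + N)"
  then have "drop s xs \<in> tuples k N" using take_drop_tuples[of xs k s N] by simp
  then show "selector s (take s xs) (\<lambda>i. F i (drop s xs)) < k"
    using assms by (intro selector_less) (auto simp: monotone_fn_def in_Pk_def)
next
  fix xs ys assume xs: "xs \<in> tuples k (s + N)" and ys: "ys \<in> tuples k (s + N)"
    and le: "list_all2 (\<le>) xs ys"
  have "drop s xs \<in> tuples k N" "drop s ys \<in> tuples k N"
    using take_drop_tuples[OF xs] take_drop_tuples[OF ys] by simp_all
  moreover have "list_all2 (\<le>) (drop s xs) (drop s ys)" using le by simp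
  ultimately have "\<forall>i\<in>{1..s}. F i (drop s xs) \<le> F i (drop s ys)"
    using assms(2) by (auto simp: monotone_fn_def)
  moreover have "\<forall>i\<in>{1..s}. take s xs ! (i - 1) \<le> take s ys ! (i - 1)"
    using le xs by (auto simp: tuples_def list_all2_conv_all_nth)
  ultimately show "selector s (take s xs) (\<lambda>i. F i (drop s xs)) \<le> selector s (take s ys) (\<lambda>i. F i (drop s ys))"
    by (intro selector_mono)
qed

section \<open>The cascade circuit\<close>

lemma eval_circ_Mono_gates:
  assumes "\<forall>p\<in>set a. p < length vals"
  shows "eval_circ \<omega> (map (\<lambda>r. (Mono (G r), a)) rs) vals = vals @ map (\<lambda>r. G r (map ((!) vals) a)) rs"
  using assms
proof (induction rs arbitrary: vals)
  case (Cons r rs)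
  have e: "map ((!) (vals @ [G r (map ((!) vals) a)])) a = map ((!) vals) a"
    using Cons.prems by (auto simp: nth_append)
  have "\<forall>p\<in>set a. p < length (vals @ [G r (map ((!) vals) a)])" using Cons.prems by auto
  from Cons.IH[OF this] show ?case by (simp only: e list.map eval_circ_Cons lab_apply.simps) simp
qed simp

lemma omega_count_Mono_gates [simp]: "omega_count (map (\<lambda>r. (Mono (G r), a)) rs) = 0"
  by (induction rs) auto

lemma wf_circ_Mono_gates:
  "\<forall>p\<in>set a. p < b \<Longrightarrow> \<forall>r\<in>set rs. monotone_fn k (length a) (G r)
   \<Longrightarrow> wf_circ k q b (map (\<lambda>r. (Mono (G r), a)) rs)"
proof (induction rs arbitrary: b)
  case (Cons r rs)
  then have "wf_circ k q (Suc b) (map (\<lambda>r. (Mono (G r), a)) rs)" by (intro Cons.IH) auto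
  with Cons.prems show ?case by (simp add: wf_circ_Cons)
qed simp

text \<open>The cascade circuit on \<open>b\<close> inputs consists of \<open>c\<close> layers of \<open>q + 1\<close> gates: in layer \<open>t\<close>,
  monotone gates \<open>H t 0, \<dots>, H t (q - 1)\<close> read the inputs and the outputs of the earlier omega
  gates and feed one omega gate; the output gates \<open>G 1, \<dots>, G m\<close> read the same nodes after the
  last layer.\<close>

definition omega_positions :: "nat \<Rightarrow> nat \<Rightarrow> nat \<Rightarrow> nat list" where
  "omega_positions b q t = map (\<lambda>u. b + u * (q + 1) + q) [0..<t]"

definition layer_args :: "nat \<Rightarrow> nat \<Rightarrow> nat \<Rightarrow> nat list" where
  "layer_args b q t = [0..<b] @ omega_positions b q t"

definition layer :: "nat \<Rightarrow> nat \<Rightarrow> (nat \<Rightarrow> nat \<Rightarrow> nat list \<Rightarrow> nat) \<Rightarrow> nat \<Rightarrow> circuit" where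
  "layer b q H t = map (\<lambda>r. (Mono (H t r), layer_args b q t)) [0..<q] @
     [(Omega, [b + t * (q + 1) ..< b + t * (q + 1) + q])]"

definition layers :: "nat \<Rightarrow> nat \<Rightarrow> (nat \<Rightarrow> nat \<Rightarrow> nat list \<Rightarrow> nat) \<Rightarrow> nat \<Rightarrow> circuit" where
  "layers b q H c = concat (map (layer b q H) [0..<c])"

definition cascade_circ ::
  "nat \<Rightarrow> nat \<Rightarrow> (nat \<Rightarrow> nat \<Rightarrow> nat list \<Rightarrow> nat) \<Rightarrow> (nat \<Rightarrow> nat list \<Rightarrow> nat) \<Rightarrow> nat \<Rightarrow> nat \<Rightarrow> circuit"
where
  "cascade_circ b q H G c m = layers b q H c @ map (\<lambda>j. (Mono (G j), layer_args b q c)) [1..<m+1]"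

fun cascade :: "(nat list \<Rightarrow> nat) \<Rightarrow> nat \<Rightarrow> (nat \<Rightarrow> nat \<Rightarrow> nat list \<Rightarrow> nat) \<Rightarrow> nat list \<Rightarrow> nat \<Rightarrow> nat list"
where
  "cascade \<omega> q H vs 0 = []"
| "cascade \<omega> q H vs (Suc t) =
     cascade \<omega> q H vs t @ [\<omega> (map (\<lambda>r. H t r (vs @ cascade \<omega> q H vs t)) [0..<q])]"

lemma length_cascade [simp]: "length (cascade \<omega> q H vs t) = t"
  by (induction t) auto

lemma take_cascade: "t \<le> c \<Longrightarrow> take t (cascade \<omega> q H vs c) = cascade \<omega> q H vs t"
  by (induction c) (auto simp: le_Suc_eq)

lemma layers_0 [simp]: "layers b q H 0 = []"
  by (simp add: layers_def)

lemma layers_Suc: "layers b q H (Suc t) = layers b q H t @ layer b q H t"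
  by (simp add: layers_def)

lemma length_layers [simp]: "length (layers b q H t) = t * (q + 1)"
  by (induction t) (auto simp: layers_Suc layer_def)

lemma omega_count_layers [simp]: "omega_count (layers b q H t) = t"
  by (induction t) (auto simp: layers_Suc layer_def omega_count_append)

lemma length_layer_args [simp]: "length (layer_args b q t) = b + t"
  by (simp add: layer_args_def omega_positions_def)

lemma layer_args_less: "p \<in> set (layer_args b q t) \<Longrightarrow> p < b + t * (q + 1)"
proof -
  assume "p \<in> set (layer_args b q t)"
  then consider "p < b" | u where "u < t" "p = b + u * (q + 1) + q"
    by (auto simp: layer_args_def omega_positions_def)
  then show ?thesis
  proof cases
    case 2
    then have "(u + 1) * (q + 1) \<le> t * (q + 1)" by (intro mult_le_mono1) simp
    with 2 show ?thesis by simp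
  qed simp
qed

lemma wf_circ_layers:
  "\<forall>t<c. \<forall>r<q. monotone_fn k (b + t) (H t r) \<Longrightarrow> wf_circ k q b (layers b q H c)"
proof (induction c)
  case (Suc t)
  have "wf_circ k q (b + t * (q + 1)) (map (\<lambda>r. (Mono (H t r), layer_args b q t)) [0..<q])"
    using Suc.prems layer_args_less by (intro wf_circ_Mono_gates) auto
  moreover have "wf_circ k q (b + t * (q + 1) + q) [(Omega, [b + t * (q + 1) ..< b + t * (q + 1) + q])]"
    by (simp add: wf_circ_Cons)
  ultimately show ?case using Suc by (simp add: layers_Suc wf_circ_append layer_def)
qed simp

lemma eval_layers_layer_args:
  assumes "length vs = b"
  shows "map ((!) (eval_circ \<omega> (layers b q H t) vs)) (layer_args b q t) = vs @ cascade \<omega> q H vs t"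
proof (induction t)
  case 0
  show ?case using assms map_nth[of vs] by (simp add: layer_args_def omega_positions_def)
next
  case (Suc t)
  let ?V = "eval_circ \<omega> (layers b q H t) vs"
  let ?R = "map (\<lambda>r. H t r (vs @ cascade \<omega> q H vs t)) [0..<q]"
  have len: "length ?V = b + t * (q + 1)" using assms by simp
  have "eval_circ \<omega> (map (\<lambda>r. (Mono (H t r), layer_args b q t)) [0..<q]) ?V = ?V @ ?R"
    using len layer_args_less Suc.IH by (subst eval_circ_Mono_gates) auto
  moreover have "map ((!) (?V @ ?R)) [b + t * (q + 1) ..< b + t * (q + 1) + q] = ?R"
    using len by (intro nth_equalityI) (auto simp: nth_append)
  ultimately have V: "eval_circ \<omega> (layers b q H (Suc t)) vs = ?V @ ?R @ [\<omega> ?R]"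
    by (simp add: layers_Suc layer_def eval_circ_append)
  have "map ((!) (?V @ ?R @ [\<omega> ?R])) (layer_args b q t) = map ((!) ?V) (layer_args b q t)"
    using layer_args_less[of _ b q t] len by (auto simp: nth_append)
  moreover have "(?V @ ?R @ [\<omega> ?R]) ! (b + t * (q + 1) + q) = \<omega> ?R"
    using len by (simp add: nth_append)
  moreover have "layer_args b q (Suc t) = layer_args b q t @ [b + t * (q + 1) + q]"
    by (simp add: layer_args_def omega_positions_def)
  ultimately show ?case using V Suc.IH by simp
qed

lemma wf_circ_cascade_circ:
  assumes "\<forall>t<c. \<forall>r<q. monotone_fn k (b + t) (H t r)" "\<forall>j\<in>{1..m}. monotone_fn k (b + c) (G j)"
  shows "wf_circ k q b (cascade_circ b q H G c m)"
proof -
  have "wf_circ k q (b + c * (q + 1)) (map (\<lambda>j. (Mono (G j), layer_args b q c)) [1..<m+1])"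
    using assms(2) layer_args_less[of _ b q c] by (intro wf_circ_Mono_gates) auto
  then show ?thesis using wf_circ_layers[OF assms(1)] by (simp add: cascade_circ_def wf_circ_append)
qed

lemma omega_count_cascade_circ [simp]: "omega_count (cascade_circ b q H G c m) = c"
  by (simp add: cascade_circ_def omega_count_append)

lemma length_cascade_circ [simp]: "length (cascade_circ b q H G c m) = c * (q + 1) + m"
  by (simp add: cascade_circ_def)

lemma eval_cascade_circ_output:
  assumes "length vs = b" "j \<in> {1..m}"
  shows "eval_circ \<omega> (cascade_circ b q H G c m) vs ! (b + c * (q + 1) + (j - 1)) =
    G j (vs @ cascade \<omega> q H vs c)"
proof -
  let ?V = "eval_circ \<omega> (layers b q H c) vs"
  have len: "length ?V = b + c * (q + 1)" using assms(1) by simp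
  have "eval_circ \<omega> (cascade_circ b q H G c m) vs =
      ?V @ map (\<lambda>j. G j (map ((!) ?V) (layer_args b q c))) [1..<m+1]"
    unfolding cascade_circ_def eval_circ_append using len layer_args_less
    by (subst eval_circ_Mono_gates) auto
  also have "\<dots> = ?V @ map (\<lambda>j. G j (vs @ cascade \<omega> q H vs c)) [1..<m+1]"
    by (simp only: eval_layers_layer_args[OF assms(1)])
  finally have "eval_circ \<omega> (cascade_circ b q H G c m) vs ! (length ?V + (j - 1)) =
      map (\<lambda>j. G j (vs @ cascade \<omega> q H vs c)) [1..<m+1] ! (j - 1)"
    by (simp only: nth_append_length_plus)
  also have "\<dots> = G j (vs @ cascade \<omega> q H vs c)"
    using assms(2) by (subst nth_map) (auto simp del: upt_Suc)
  finally show ?thesis by (simp only: len)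
qed

section \<open>The connector circuit\<close>

lemma cascade_omega_vals:
  assumes "\<And>t ys. t < omega_count C \<Longrightarrow> map (\<lambda>r. H t r (vs @ ys)) [0..<q] = omega_args C ys x ! t"
  shows "t \<le> omega_count C \<Longrightarrow> cascade \<omega> q H vs t = take t (omega_vals \<omega> C x)"
proof (induction t)
  case (Suc t)
  let ?T = "omega_vals \<omega> C x"
  have t: "t < omega_count C" using Suc.prems by simp
  have IH: "cascade \<omega> q H vs t = take t ?T" using Suc by simp
  have "take (Suc t) (omega_args C (take t ?T) x) = take (Suc t) (omega_args C ?T x)"
    by (intro omega_args_take_eq) simp
  then have "omega_args C (take t ?T) x ! t = omega_args C ?T x ! t"
    by (metis lessI nth_take)
  then have "\<omega> (map (\<lambda>r. H t r (vs @ cascade \<omega> q H vs t)) [0..<q]) = ?T ! t"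
    using assms[OF t] IH t map_omega_omega_args[of \<omega> C x]
      nth_map[of t "omega_args C ?T x" \<omega>] by simp
  then show ?case using IH t by (simp add: take_Suc_conv_app_nth)
qed simp

definition connector_circ ::
  "nat \<Rightarrow> nat \<Rightarrow> nat \<Rightarrow> nat \<Rightarrow> (nat \<Rightarrow> circuit) \<Rightarrow> (nat \<Rightarrow> nat \<Rightarrow> nat) \<Rightarrow> nat \<Rightarrow> circuit"
where
  "connector_circ s n q c CC P m = cascade_circ (s + n) q
     (\<lambda>t r vs. selector s (take s vs) (\<lambda>i. omega_arg (CC i) n t r (drop s vs)))
     (\<lambda>j vs. selector s (take s vs) (\<lambda>i. eval_open (CC i) (drop n (drop s vs)) (take n (drop s vs)) ! P i j))
     c m"

lemma wf_circ_connector_circ: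
  assumes "0 < k" "\<forall>i\<in>{1..s}. wf_circ k q n (CC i)"
    "\<forall>i\<in>{1..s}. \<forall>j\<in>{1..m}. P i j < n + length (CC i)"
  shows "wf_circ k q (s + n) (connector_circ s n q c CC P m)"
  unfolding connector_circ_def
proof (rule wf_circ_cascade_circ; intro allI impI ballI)
  fix t r assume "r < q"
  then have "monotone_fn k (s + (n + t))
      (\<lambda>vs. selector s (take s vs) (\<lambda>i. omega_arg (CC i) n t r (drop s vs)))"
    using assms(1,2) monotone_fn_omega_arg by (intro monotone_fn_selector) auto
  then show "monotone_fn k (s + n + t)
      (\<lambda>vs. selector s (take s vs) (\<lambda>i. omega_arg (CC i) n t r (drop s vs)))"
    by (simp add: add.assoc)
next
  fix j assume "j \<in> {1..m}"
  then have "monotone_fn k (s + (n + c)) (\<lambda>vs. selector s (take s vs)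
      (\<lambda>i. eval_open (CC i) (drop n (drop s vs)) (take n (drop s vs)) ! P i j))"
    using assms monotone_fn_eval_open by (intro monotone_fn_selector) auto
  then show "monotone_fn k (s + n + c) (\<lambda>vs. selector s (take s vs)
      (\<lambda>i. eval_open (CC i) (drop n (drop s vs)) (take n (drop s vs)) ! P i j))"
    by (simp add: add.assoc)
qed

text \<open>On the \<open>i\<close>-th unit tuple every selector picks the \<open>i\<close>-th circuit, so the cascade feeds the
  omega gates exactly the arguments they get in \<open>CC i\<close> and hence reproduces its omega outputs.\<close>

lemma eval_connector_circ:
  assumes "\<forall>i\<in>{1..s}. wf_circ k q n (CC i) \<and> omega_count (CC i) \<le> c"
    and "i \<in> {1..s}" "j \<in> {1..m}" "length xs = n"
  shows "eval_circ \<omega> (connector_circ s n q c CC P m) (unit_tuple s i @ xs) ! (s + n + c * (q + 1) + (j - 1))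
    = eval_circ \<omega> (CC i) xs ! P i j"
proof -
  let ?vs = "unit_tuple s i @ xs"
  let ?H = "\<lambda>t r vs. selector s (take s vs) (\<lambda>i. omega_arg (CC i) n t r (drop s vs))"
  let ?Y = "cascade \<omega> q ?H ?vs c"
  have wf: "wf_circ k q (length xs) (CC i)" and cnt: "omega_count (CC i) \<le> c"
    using assms by auto
  have "map (\<lambda>r. ?H t r (?vs @ ys)) [0..<q] = omega_args (CC i) ys xs ! t"
    if "t < omega_count (CC i)" for t ys
  proof -
    have "?H t r (?vs @ ys) = omega_args (CC i) ys xs ! t ! r" for r
      using that assms(2,4) selector_unit_tuple[OF assms(2)] by (simp add: omega_arg_def)
    then show ?thesis
      using length_omega_args_nth[OF wf that, of ys] map_nth[of "omega_args (CC i) ys xs ! t"] by simp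
  qed
  then have "take (omega_count (CC i)) ?Y = omega_vals \<omega> (CC i) xs"
    using cascade_omega_vals[where C = "CC i" and H = ?H and vs = ?vs and x = xs] cnt by (simp add: take_cascade)
  then have "eval_open (CC i) ?Y xs = eval_circ \<omega> (CC i) xs"
    using eval_open_take_eq[of "CC i" ?Y "omega_vals \<omega> (CC i) xs" xs] eval_open_omega_vals by simp
  moreover have "length ?vs = s + n" using assms(4) by simp
  ultimately show ?thesis
    unfolding connector_circ_def using assms(2,4)
    by (simp only: eval_cascade_circ_output[OF _ assms(3)]) (simp add: selector_unit_tuple)
qed

section \<open>Fixing inputs to constants\<close>

definition relabel :: "(nat \<Rightarrow> nat) \<Rightarrow> circuit \<Rightarrow> circuit" where
  "relabel \<rho> D = map (\<lambda>(l, a). (l, map \<rho> a)) D"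

lemma relabel_Cons [simp]: "relabel \<rho> ((l, a) # D) = (l, map \<rho> a) # relabel \<rho> D"
  by (simp add: relabel_def)

lemma length_relabel [simp]: "length (relabel \<rho> D) = length D"
  by (simp add: relabel_def)

lemma omega_count_relabel [simp]: "omega_count (relabel \<rho> D) = omega_count D"
  by (induction D) (auto simp: relabel_def omega_count_def)

definition preserves_prefix :: "nat \<Rightarrow> (nat \<Rightarrow> nat) \<Rightarrow> bool" where
  "preserves_prefix B \<rho> \<longleftrightarrow> (\<forall>p<B. \<rho> p < B) \<and> (\<forall>p\<ge>B. \<rho> p = p)"

lemma preserves_prefix_less: "preserves_prefix B \<rho> \<Longrightarrow> p < L \<Longrightarrow> B \<le> L \<Longrightarrow> \<rho> p < L"
  unfolding preserves_prefix_def by (cases "p < B") auto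

lemma wf_circ_relabel:
  "wf_circ k q L D \<Longrightarrow> preserves_prefix B \<rho> \<Longrightarrow> B \<le> L \<Longrightarrow> wf_circ k q L (relabel \<rho> D)"
proof (induction D arbitrary: L)
  case (Cons g D)
  obtain l a where g: "g = (l, a)" by fastforce
  have "wf_circ k q (Suc L) (relabel \<rho> D)" using Cons g by (simp add: wf_circ_Cons)
  moreover have "\<forall>i\<in>set (map \<rho> a). i < L"
    using Cons.prems g preserves_prefix_less[OF Cons.prems(2)] by (auto simp: wf_circ_Cons)
  ultimately show ?case using Cons.prems(1) g by (cases l) (auto simp: wf_circ_Cons)
qed (simp add: relabel_def)

lemma eval_circ_relabel:
  assumes "wf_circ k q (length vals) D" "preserves_prefix B \<rho>" "B \<le> length vals"
    "length vals' = length vals" "\<forall>p<length vals. vals' ! \<rho> p = vals ! p"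
  shows "\<forall>p<length vals + length D. eval_circ \<omega> (relabel \<rho> D) vals' ! \<rho> p = eval_circ \<omega> D vals ! p"
  using assms
proof (induction D arbitrary: vals vals')
  case (Cons g D)
  obtain l a where g: "g = (l, a)" by fastforce
  define v where "v = lab_apply \<omega> l (map ((!) vals) a)"
  have args: "\<forall>i\<in>set a. i < length vals" "wf_circ k q (Suc (length vals)) D"
    using Cons.prems(1) g by (auto simp: wf_circ_Cons)
  have "map ((!) vals' \<circ> \<rho>) a = map ((!) vals) a"
    using args(1) Cons.prems(5) by auto
  then have step: "eval_circ \<omega> (relabel \<rho> (g # D)) vals' = eval_circ \<omega> (relabel \<rho> D) (vals' @ [v])"
    by (simp only: g v_def relabel_Cons eval_circ_Cons map_map)
  have "\<forall>p<length (vals @ [v]). (vals' @ [v]) ! \<rho> p = (vals @ [v]) ! p"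
  proof (intro allI impI)
    fix p assume p: "p < length (vals @ [v])"
    show "(vals' @ [v]) ! \<rho> p = (vals @ [v]) ! p"
    proof (cases "p < length vals")
      case True
      then have "\<rho> p < length vals" using preserves_prefix_less Cons.prems(2,3) by blast
      then show ?thesis using True Cons.prems(4,5) by (simp add: nth_append)
    next
      case False
      then have "p = length vals" "\<rho> p = p"
        using p Cons.prems(2,3) by (auto simp: preserves_prefix_def)
      then show ?thesis using Cons.prems(4) by (simp add: nth_append)
    qed
  qed
  then have "\<forall>p<length (vals @ [v]) + length D.
      eval_circ \<omega> (relabel \<rho> D) (vals' @ [v]) ! \<rho> p = eval_circ \<omega> D (vals @ [v]) ! p"
    using args(2) Cons.prems(2,3,4) by (intro Cons.IH) auto
  then show ?case using step g by (simp add: v_def)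
qed (simp add: relabel_def)

definition const_gates :: "nat list \<Rightarrow> circuit" where
  "const_gates e = map (\<lambda>l. (Mono (\<lambda>_. e ! l), [])) [0..<length e]"

lemma eval_circ_const_gates: "eval_circ \<omega> (const_gates e) xs = xs @ e"
  unfolding const_gates_def by (subst eval_circ_Mono_gates) (simp_all add: map_nth)

lemma wf_circ_const_gates: "set e \<subseteq> {..<k} \<Longrightarrow> wf_circ k q n (const_gates e)"
  unfolding const_gates_def
  by (rule wf_circ_Mono_gates) (auto simp: monotone_fn_def in_Pk_def intro: nth_lessThan)

definition input_swap :: "nat \<Rightarrow> nat \<Rightarrow> nat \<Rightarrow> nat" where
  "input_swap s n p = (if p < s then n + p else if p < s + n then p - s else p)"

lemma preserves_prefix_input_swap: "preserves_prefix (s + n) (input_swap s n)"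
  by (auto simp: preserves_prefix_def input_swap_def)

text \<open>Fixing the first \<open>s\<close> inputs to constants: the constants are produced by 0-ary monotone
  gates placed after the remaining inputs, so the first \<open>s + n\<close> nodes are permuted.\<close>

lemma realizes_fix_inputs:
  assumes "wf_circ k q (s + n) D" "realizes k (s + n) \<omega> D G" "e \<in> tuples k s"
    and "\<forall>f\<in>F. \<exists>g\<in>G. \<forall>xs\<in>tuples k n. g (e @ xs) = f xs"
  shows "\<exists>C. wf_circ k q n C \<and> realizes k n \<omega> C F \<and> omega_count C = omega_count D"
proof (intro exI conjI)
  let ?C = "const_gates e @ relabel (input_swap s n) D"
  have e: "length e = s" "set e \<subseteq> {..<k}" using assms(3) by (simp_all add: tuples_def)
  have "wf_circ k q (s + n) (relabel (input_swap s n) D)"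
    using wf_circ_relabel[OF assms(1) preserves_prefix_input_swap] by simp
  then show "wf_circ k q n ?C"
    using wf_circ_const_gates[OF e(2)] e(1) by (simp add: wf_circ_append const_gates_def add.commute)
  show "omega_count ?C = omega_count D"
    by (simp add: omega_count_append const_gates_def)
  have node: "eval_circ \<omega> ?C xs ! input_swap s n p = eval_circ \<omega> D (e @ xs) ! p"
    if "length xs = n" "p < s + n + length D" for xs p
  proof -
    have "\<forall>p<length (e @ xs). (xs @ e) ! input_swap s n p = (e @ xs) ! p"
      using e(1) that(1) by (auto simp: input_swap_def nth_append)
    then have "\<forall>p<length (e @ xs) + length D.
        eval_circ \<omega> (relabel (input_swap s n) D) (xs @ e) ! input_swap s n p = eval_circ \<omega> D (e @ xs) ! p"
      using assms(1) e(1) that(1) preserves_prefix_input_swap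
      by (intro eval_circ_relabel[where B = "s + n"]) auto
    then show ?thesis using that e(1) by (simp add: eval_circ_append eval_circ_const_gates)
  qed
  show "realizes k n \<omega> ?C F"
    unfolding realizes_def
  proof
    fix f assume "f \<in> F"
    then obtain g where "g \<in> G" and g: "\<forall>xs\<in>tuples k n. g (e @ xs) = f xs" using assms(4) by blast
    then obtain p where p: "p < s + n + length D" "\<forall>vs\<in>tuples k (s + n). eval_circ \<omega> D vs ! p = g vs"
      using assms(2) by (auto simp: realizes_def)
    have "input_swap s n p < n + length ?C"
      using preserves_prefix_less[OF preserves_prefix_input_swap[of s n] p(1)] e(1) by (simp add: const_gates_def)
    moreover have "eval_circ \<omega> ?C xs ! input_swap s n p = f xs" if "xs \<in> tuples k n" for xs
    proof -
      have "e @ xs \<in> tuples k (s + n)" using that assms(3) by (auto simp: tuples_def)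
      then show ?thesis using node[of xs p] p g that by (simp add: tuples_def)
    qed
    ultimately show "\<exists>i<n + length ?C. \<forall>xs\<in>tuples k n. eval_circ \<omega> ?C xs ! i = f xs" by blast
  qed
qed

lemma I_B_attained:
  assumes "\<exists>C. wf_circ k q n C \<and> realizes k n \<omega> C F"
  shows "\<exists>C. wf_circ k q n C \<and> realizes k n \<omega> C F \<and> omega_count C = I_B k q \<omega> n F"
proof -
  have "\<exists>c. \<exists>C. wf_circ k q n C \<and> realizes k n \<omega> C F \<and> omega_count C = c"
    using assms by blast
  then show ?thesis unfolding I_B_def by (rule LeastI_ex)
qed

lemma I_B_le:
  "wf_circ k q n C \<Longrightarrow> realizes k n \<omega> C F \<Longrightarrow> I_B k q \<omega> n F \<le> omega_count C"
  unfolding I_B_def by (blast intro: Least_le)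

text \<open>For unrealizable systems \<open>I_B\<close> is the junk value \<open>LEAST c. False\<close>, the same for all of them.\<close>

lemma I_B_unrealizable_eq:
  assumes "\<nexists>C. wf_circ k q n C \<and> realizes k n \<omega> C F"
    and "\<nexists>D. wf_circ k q n' D \<and> realizes k n' \<omega> D G"
  shows "I_B k q \<omega> n' G = I_B k q \<omega> n F"
proof -
  have "(\<lambda>c. \<exists>D. wf_circ k q n' D \<and> realizes k n' \<omega> D G \<and> omega_count D = c) =
      (\<lambda>c. \<exists>C. wf_circ k q n C \<and> realizes k n \<omega> C F \<and> omega_count C = c)"
    using assms by blast
  then show ?thesis unfolding I_B_def by (rule arg_cong)
qed

lemma connectors_of_realizable:
  fixes f :: "nat \<Rightarrow> nat \<Rightarrow> nat list \<Rightarrow> nat"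
  assumes "0 < k" "in_Pk k q \<omega>"
    and "\<forall>i\<in>{1..s}. \<exists>C. wf_circ k q n C \<and> realizes k n \<omega> C ((\<lambda>j. f i j) ` {1..m})"
    and "\<forall>i\<in>{1..s}. I_B k q \<omega> n ((\<lambda>j. f i j) ` {1..m}) \<le> c"
  shows "\<exists>g. (\<forall>j\<in>{1..m}. in_Pk k (s + n) (g j) \<and> connector k s n (g j) (\<lambda>i. f i j)) \<and>
    I_B k q \<omega> (s + n) (g ` {1..m}) \<le> c"
proof -
  have "\<forall>i\<in>{1..s}. \<exists>C. wf_circ k q n C \<and> realizes k n \<omega> C ((\<lambda>j. f i j) ` {1..m}) \<and>
      omega_count C = I_B k q \<omega> n ((\<lambda>j. f i j) ` {1..m})"
    using assms(3) I_B_attained by blast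
  from bchoice[OF this] obtain CC where "\<forall>i\<in>{1..s}. wf_circ k q n (CC i) \<and>
      realizes k n \<omega> (CC i) ((\<lambda>j. f i j) ` {1..m}) \<and>
      omega_count (CC i) = I_B k q \<omega> n ((\<lambda>j. f i j) ` {1..m})"
    by blast
  with assms(4) have CC: "\<forall>i\<in>{1..s}. wf_circ k q n (CC i) \<and>
      realizes k n \<omega> (CC i) ((\<lambda>j. f i j) ` {1..m}) \<and> omega_count (CC i) \<le> c"
    by simp
  then have "\<forall>i\<in>{1..s}. \<exists>Pi. \<forall>j\<in>{1..m}. Pi j < n + length (CC i) \<and>
      (\<forall>xs\<in>tuples k n. eval_circ \<omega> (CC i) xs ! Pi j = f i j xs)"
    unfolding realizes_def by (intro ballI bchoice) blast
  from bchoice[OF this] obtain P where P: "\<forall>i\<in>{1..s}. \<forall>j\<in>{1..m}. P i j < n + length (CC i) \<and>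
      (\<forall>xs\<in>tuples k n. eval_circ \<omega> (CC i) xs ! P i j = f i j xs)"
    by blast
  define D where "D = connector_circ s n q c CC P m"
  define g where "g j vs = eval_circ \<omega> D vs ! (s + n + c * (q + 1) + (j - 1))" for j vs
  have wf: "wf_circ k q (s + n) D"
    unfolding D_def using assms(1) CC P by (intro wf_circ_connector_circ) auto
  have node: "s + n + c * (q + 1) + (j - 1) < s + n + length D" if "j \<in> {1..m}" for j
    using that by (auto simp: D_def connector_circ_def)
  have "in_Pk k (s + n) (g j)" if "j \<in> {1..m}" for j
    unfolding in_Pk_def
  proof
    fix vs assume "vs \<in> tuples k (s + n)"
    then have "length vs = s + n" "set (eval_circ \<omega> D vs) \<subseteq> {..<k}"
      using eval_circ_lessThan[where C = D and vals = vs] wf assms(2) by (simp_all add: tuples_def)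
    then show "g j vs < k" unfolding g_def using node[OF that] by (simp add: nth_lessThan)
  qed
  moreover have "connector k s n (g j) (\<lambda>i. f i j)" if "j \<in> {1..m}" for j
    unfolding connector_def g_def D_def
  proof (intro ballI)
    fix i xs assume "i \<in> {1..s}" "xs \<in> tuples k n"
    then show "eval_circ \<omega> (connector_circ s n q c CC P m) (unit_tuple s i @ xs) !
        (s + n + c * (q + 1) + (j - 1)) = f i j xs"
      using eval_connector_circ[of s k q n CC c i j m xs] CC P that by (simp add: tuples_def)
  qed
  moreover have "realizes k (s + n) \<omega> D (g ` {1..m})"
    unfolding realizes_def g_def using node by blast
  then have "I_B k q \<omega> (s + n) (g ` {1..m}) \<le> c"
    using I_B_le[OF wf] by (simp add: D_def connector_circ_def)
  ultimately show ?thesis by blast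
qed

lemma connectors_of_unrealizable:
  fixes f :: "nat \<Rightarrow> nat \<Rightarrow> nat list \<Rightarrow> nat"
  assumes "2 \<le> k" "\<forall>i\<in>{1..s}. \<forall>j\<in>{1..m}. in_Pk k n (f i j)"
    and "i\<^sub>0 \<in> {1..s}" "\<nexists>C. wf_circ k q n C \<and> realizes k n \<omega> C ((\<lambda>j. f i\<^sub>0 j) ` {1..m})"
  shows "\<exists>g. (\<forall>j\<in>{1..m}. in_Pk k (s + n) (g j) \<and> connector k s n (g j) (\<lambda>i. f i j)) \<and>
    I_B k q \<omega> (s + n) (g ` {1..m}) = I_B k q \<omega> n ((\<lambda>j. f i\<^sub>0 j) ` {1..m})"
proof -
  define g where "g j vs = (if \<exists>i\<in>{1..s}. take s vs = unit_tuple s i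
    then f (THE i. i \<in> {1..s} \<and> take s vs = unit_tuple s i) j (drop s vs) else 0)" for j vs
  have g_unit: "g j (unit_tuple s i @ xs) = f i j xs" if "i \<in> {1..s}" for i j xs
  proof -
    have "(THE i'. i' \<in> {1..s} \<and> unit_tuple s i = unit_tuple s i') = i"
      using that unit_tuple_inj by blast
    then show ?thesis using that unfolding g_def by auto
  qed
  have "in_Pk k (s + n) (g j)" if "j \<in> {1..m}" for j
    unfolding in_Pk_def
  proof
    fix vs assume vs: "vs \<in> tuples k (s + n)"
    show "g j vs < k"
    proof (cases "\<exists>i\<in>{1..s}. take s vs = unit_tuple s i")
      case True
      then obtain i where i: "i \<in> {1..s}" "take s vs = unit_tuple s i" by blast
      then have "vs = unit_tuple s i @ drop s vs" by (metis append_take_drop_id)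
      moreover have "drop s vs \<in> tuples k n" using take_drop_tuples[OF vs] by simp
      ultimately show ?thesis
        using g_unit[OF i(1)] assms(2) i(1) that by (metis in_Pk_def)
    qed (use assms(1) g_def in simp)
  qed
  moreover have "connector k s n (g j) (\<lambda>i. f i j)" for j
    unfolding connector_def using g_unit by simp
  moreover have "\<nexists>D. wf_circ k q (s + n) D \<and> realizes k (s + n) \<omega> D (g ` {1..m})"
  proof
    assume "\<exists>D. wf_circ k q (s + n) D \<and> realizes k (s + n) \<omega> D (g ` {1..m})"
    then obtain D where "wf_circ k q (s + n) D" "realizes k (s + n) \<omega> D (g ` {1..m})" by blast
    moreover have "\<forall>h\<in>(\<lambda>j. f i\<^sub>0 j) ` {1..m}. \<exists>g'\<in>g ` {1..m}.
        \<forall>xs\<in>tuples k n. g' (unit_tuple s i\<^sub>0 @ xs) = h xs"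
      using g_unit[OF assms(3)] by blast
    ultimately show False
      using realizes_fix_inputs unit_tuple_tuples[OF assms(1)] assms(4) by blast
  qed
  then have "I_B k q \<omega> (s + n) (g ` {1..m}) = I_B k q \<omega> n ((\<lambda>j. f i\<^sub>0 j) ` {1..m})"
    by (rule I_B_unrealizable_eq[OF assms(4)])
  ultimately show ?thesis by blast
qed

theorem lemma2:
  fixes k q s m n :: nat and \<omega> :: "nat list \<Rightarrow> nat"
    and f :: "nat \<Rightarrow> nat \<Rightarrow> nat list \<Rightarrow> nat"
  assumes "k \<ge> 2" and "q \<ge> 1"
    and "in_Pk k q \<omega>" and "\<not> monotone_fn k q \<omega>"
    and "s \<ge> 1" and "m \<ge> 1" and "n \<ge> 1"
    and "\<forall>i\<in>{1..s}. \<forall>j\<in>{1..m}. in_Pk k n (f i j)"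
  shows "\<exists>g :: nat \<Rightarrow> nat list \<Rightarrow> nat.
           (\<forall>j\<in>{1..m}. in_Pk k (s + n) (g j) \<and> connector k s n (g j) (\<lambda>i. f i j)) \<and>
           I_B k q \<omega> (s + n) (g ` {1..m})
             \<le> Max ((\<lambda>i. I_B k q \<omega> n ((\<lambda>j. f i j) ` {1..m})) ` {1..s})"
proof -
  let ?I = "\<lambda>i. I_B k q \<omega> n ((\<lambda>j. f i j) ` {1..m})"
  have I_le_Max: "\<forall>i\<in>{1..s}. ?I i \<le> Max (?I ` {1..s})" by simp
  show ?thesis
  proof (cases "\<forall>i\<in>{1..s}. \<exists>C. wf_circ k q n C \<and> realizes k n \<omega> C ((\<lambda>j. f i j) ` {1..m})")
    case True
    then show ?thesis
      using connectors_of_realizable[OF _ assms(3) True I_le_Max] assms(1) by simp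
  next
    case False
    then obtain i\<^sub>0 where "i\<^sub>0 \<in> {1..s}"
      and "\<nexists>C. wf_circ k q n C \<and> realizes k n \<omega> C ((\<lambda>j. f i\<^sub>0 j) ` {1..m})" by blast
    with connectors_of_unrealizable[OF assms(1,8)] I_le_Max show ?thesis by fastforce
  qed
qed

end
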